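(* Consider the set $T$ of triples $(f_2,f_3,f_4)$ of forms in $\mathbb{R}[x,y]$ with $\deg(f_i)=i$ for which there exist a real number $t\ne0$ and forms $\xi,\eta\in\mathbb{R}[x,y]$ of degrees $2$ and $3$ with $\eta^2=(f_2-t\xi)(4f_4-\xi^2)-f_3^2=:g_t(\xi)$ such that $g_t(\xi)$ and $h_t(\xi):=3t\xi^2-2f_2\xi-4tf_4$ have a common irreducible quadratic factor in $\mathbb{R}[x,y]$. Then $T$ is not Zariski dense in the real vector space of triples of binary forms of degrees $2,3,4$; that is, there is a nonzero polynomial in the coefficients of $f_2,f_3,f_4$ vanishing on all of $T$. *)

theory Defs
  imports "HOL-Computational_Algebra.Polynomial_Factorial"
begin

text \<open>The ring R[x,y] is represented as (R[x])[y], i.e. the type real poly poly: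
  the outer variable is y, the inner one is x.  The monomial x^i y^j of a
  bivariate polynomial f has coefficient poly.coeff (coeff f j) i.\<close>

type_synonym bpoly = "real poly poly"

definition form_of_degree :: "nat \<Rightarrow> bpoly \<Rightarrow> bool" where
  "form_of_degree d f \<longleftrightarrow> f \<noteq> 0 \<and>
     (\<forall>i j. poly.coeff (coeff f j) i \<noteq> 0 \<longrightarrow> i + j = d)"

definition bconst :: "real \<Rightarrow> bpoly" where
  "bconst t = [:[:t:]:]"

definition form_coeff :: "nat \<Rightarrow> bpoly \<Rightarrow> nat \<Rightarrow> real" where
  "form_coeff d f j = poly.coeff (coeff f j) (d - j)"

definition triple_coords :: "bpoly \<Rightarrow> bpoly \<Rightarrow> bpoly \<Rightarrow> nat \<Rightarrow> real" where
  "triple_coords f2 f3 f4 k =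
     (if k < 3 then form_coeff 2 f2 k
      else if k < 7 then form_coeff 3 f3 (k - 3)
      else form_coeff 4 f4 (k - 7))"

text \<open>A polynomial in the 12 variables v_0..v_11 is given by its coefficient function
  c on exponent vectors alpha (alpha i = exponent of v_i), with finite support and only
  exponents on the variables 0..11.\<close>
definition poly12 :: "((nat \<Rightarrow> nat) \<Rightarrow> real) \<Rightarrow> bool" where
  "poly12 c \<longleftrightarrow> finite {\<alpha>. c \<alpha> \<noteq> 0} \<and> (\<forall>\<alpha> i. c \<alpha> \<noteq> 0 \<longrightarrow> i \<ge> 12 \<longrightarrow> \<alpha> i = 0)"

definition eval12 :: "((nat \<Rightarrow> nat) \<Rightarrow> real) \<Rightarrow> (nat \<Rightarrow> real) \<Rightarrow> real" where
  "eval12 c v = (\<Sum>\<alpha>\<in>{\<alpha>. c \<alpha> \<noteq> 0}. c \<alpha> * (\<Prod>i<12. v i ^ \<alpha> i))"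

definition g_t :: "bpoly \<Rightarrow> bpoly \<Rightarrow> bpoly \<Rightarrow> real \<Rightarrow> bpoly \<Rightarrow> bpoly" where
  "g_t f2 f3 f4 t \<xi> = (f2 - bconst t * \<xi>) * (4 * f4 - \<xi>^2) - f3^2"

definition h_t :: "bpoly \<Rightarrow> bpoly \<Rightarrow> real \<Rightarrow> bpoly \<Rightarrow> bpoly" where
  "h_t f2 f4 t \<xi> = 3 * bconst t * \<xi>^2 - 2 * f2 * \<xi> - 4 * bconst t * f4"

definition in_T :: "bpoly \<Rightarrow> bpoly \<Rightarrow> bpoly \<Rightarrow> bool" where
  "in_T f2 f3 f4 \<longleftrightarrow> form_of_degree 2 f2 \<and> form_of_degree 3 f3 \<and> form_of_degree 4 f4 \<and>
     (\<exists>t \<xi> \<eta>. t \<noteq> 0 \<and> form_of_degree 2 \<xi> \<and> form_of_degree 3 \<eta> \<and>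
        \<eta>^2 = g_t f2 f3 f4 t \<xi> \<and>
        (\<exists>q. form_of_degree 2 q \<and> irreducible q \<and>
              q dvd g_t f2 f3 f4 t \<xi> \<and> q dvd h_t f2 f4 t \<xi>))"

end

theory Submission
  imports Defs "HOL-Library.Function_Algebras" "HOL-Library.FuncSet"
begin

text \<open>Set \<open>y = 1\<close>. For a triple in T write \<open>X = \<xi>\<close>, \<open>A = f2 - t X\<close>, \<open>B = 4 f4 - X\<^sup>2\<close> and
  \<open>C = f3\<close>, so that \<open>g_t = A B - C\<^sup>2 = \<eta>\<^sup>2\<close> and \<open>h_t = -(t B + 2 X A)\<close>, and let Q be the common
  irreducible quadratic factor. As \<open>\<real>[x]/(Q) \<cong> \<complex>\<close>, \<open>X = -(t/2) S\<^sup>2 + \<mu> Q\<close> for a linear S and a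
  constant \<mu>; then Q divides \<open>(C - S A)(C + S A)\<close>, so after fixing the sign of S we get
  \<open>C = S A + Q K\<close>, and with \<open>\<eta> = Q L\<close> and \<open>t B + 2 X A = Q R\<close> one finds
  \<open>A W = t Q (K\<^sup>2 + L\<^sup>2)\<close> for \<open>W = R - 2 \<mu> A - 2 t S K\<close>. Hence Q divides W or A, and in both
  cases, after rescaling, the triple is a value of one of three explicit polynomial maps from
  \<open>\<real>\<^sup>1\<^sup>1\<close> to \<open>\<real>\<^sup>1\<^sup>2\<close>.

  Finitely many polynomial maps \<open>\<real>\<^sup>m \<rightarrow> \<real>\<^sup>n\<close> with \<open>m < n\<close> have their images in a
  hypersurface: for e large the monomials of degree at most e in the n target coordinates
  outnumber the monomials their pull-backs are combinations of, so some nontrivial combination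
  vanishes on all images.\<close>

section \<open>Linear dependence of real-valued functions\<close>

text \<open>HOL has no real vector space instance for function types, so it is set up here.\<close>
definition fun_scale :: "real \<Rightarrow> ('a \<Rightarrow> real) \<Rightarrow> 'a \<Rightarrow> real" where
  "fun_scale r f = (\<lambda>x. r * f x)"

interpretation real_fun: vector_space "fun_scale :: real \<Rightarrow> ('a \<Rightarrow> real) \<Rightarrow> _"
  by unfold_locales (auto simp: fun_scale_def fun_eq_iff algebra_simps)

lemma sum_fun_apply: "(sum F A :: 'a \<Rightarrow> real) x = (\<Sum>v\<in>A. F v x)"
  by (induction A rule: infinite_finite_induct) auto

lemma functions_in_small_span_dependent:
  fixes g :: "'i \<Rightarrow> 'a \<Rightarrow> real"
  assumes "finite I" "finite S" "card S < card I"
    and span: "\<And>i. i \<in> I \<Longrightarrow> g i \<in> real_fun.span S"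
  shows "\<exists>c. (\<exists>i\<in>I. c i \<noteq> 0) \<and> (\<forall>x. (\<Sum>i\<in>I. c i * g i x) = 0)"
proof (cases "inj_on g I")
  case False
  then obtain i j where ij: "i \<in> I" "j \<in> I" "i \<noteq> j" "g i = g j"
    by (auto simp: inj_on_def)
  define c where "c k = (if k = i then 1 else if k = j then -1 else 0 :: real)" for k
  have "(\<Sum>k\<in>I. c k * g k x) = (\<Sum>k\<in>{i, j}. c k * g k x)" for x
    by (rule sum.mono_neutral_right) (use assms(1) ij in \<open>auto simp: c_def\<close>)
  then show ?thesis
    using ij by (intro exI[of _ c]) (auto simp: c_def)
next
  case True
  have "\<not> real_fun.independent (g ` I)"
  proof
    assume "real_fun.independent (g ` I)"
    with real_fun.independent_span_bound[OF \<open>finite S\<close>] span have "card (g ` I) \<le> card S"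
      by blast
    with True \<open>card S < card I\<close> show False
      by (simp add: card_image)
  qed
  then obtain u where u: "\<exists>v\<in>g ` I. u v \<noteq> 0" "(\<Sum>v\<in>g ` I. fun_scale (u v) v) = 0"
    using real_fun.dependent_finite[of "g ` I"] assms(1) by auto
  have "(\<Sum>i\<in>I. u (g i) * g i x) = (\<Sum>v\<in>g ` I. fun_scale (u v) v) x" for x
    by (simp add: sum.reindex[OF True] sum_fun_apply fun_scale_def)
  with u show ?thesis
    by (intro exI[of _ "u \<circ> g"]) auto
qed

section \<open>Polynomial functions and images of polynomial maps\<close>

definition exponent_box :: "nat \<Rightarrow> nat \<Rightarrow> (nat \<Rightarrow> nat) set" where
  "exponent_box m d = {\<beta>. (\<forall>j<m. \<beta> j \<le> d) \<and> (\<forall>j\<ge>m. \<beta> j = 0)}"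

lemma finite_exponent_box: "finite (exponent_box m d)"
  unfolding exponent_box_def
  by (rule finite_subset[OF _ finite_set_of_finite_funs[of "{..<m}" "{..d}"]]) auto

lemma card_exponent_box: "card (exponent_box m d) = (d + 1) ^ m"
proof -
  have "bij_betw (\<lambda>\<beta>. restrict \<beta> {..<m}) (exponent_box m d) (PiE {..<m} (\<lambda>_. {..d}))"
  proof (rule bij_betwI[where g = "\<lambda>f j. if j < m then f j else 0"])
    show "(\<lambda>f j. if j < m then f j else 0) \<in> PiE {..<m} (\<lambda>_. {..d}) \<rightarrow> exponent_box m d"
      by (auto simp: exponent_box_def PiE_def Pi_def)
  qed (auto simp: exponent_box_def fun_eq_iff PiE_def extensional_def)
  then show ?thesis
    by (simp add: bij_betw_same_card card_PiE)
qed

lemma exponent_box_mono: "d \<le> d' \<Longrightarrow> exponent_box m d \<subseteq> exponent_box m d'"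
  unfolding exponent_box_def by auto

definition monomial_fun :: "nat \<Rightarrow> (nat \<Rightarrow> nat) \<Rightarrow> (nat \<Rightarrow> real) \<Rightarrow> real" where
  "monomial_fun m \<beta> v = (\<Prod>j<m. v j ^ \<beta> j)"

text \<open>Degrees are bounded per variable, by an exponent box, rather than in total.\<close>
definition polyfun_deg :: "nat \<Rightarrow> nat \<Rightarrow> ((nat \<Rightarrow> real) \<Rightarrow> real) \<Rightarrow> bool" where
  "polyfun_deg m d f \<longleftrightarrow> f \<in> real_fun.span (monomial_fun m ` exponent_box m d)"

definition polyfun :: "nat \<Rightarrow> ((nat \<Rightarrow> real) \<Rightarrow> real) \<Rightarrow> bool" where
  "polyfun m f \<longleftrightarrow> (\<exists>d. polyfun_deg m d f)"

lemma polyfun_deg_mono: "polyfun_deg m d f \<Longrightarrow> d \<le> d' \<Longrightarrow> polyfun_deg m d' f"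
  unfolding polyfun_deg_def
  by (erule set_mp[OF real_fun.span_mono, rotated]) (intro image_mono exponent_box_mono)

lemma polyfun_deg_add: "polyfun_deg m d f \<Longrightarrow> polyfun_deg m d g \<Longrightarrow> polyfun_deg m d (\<lambda>u. f u + g u)"
  unfolding polyfun_deg_def using real_fun.span_add[of f _ g] by (simp add: plus_fun_def)

lemma polyfun_deg_scale: "polyfun_deg m d f \<Longrightarrow> polyfun_deg m d (\<lambda>u. c * f u)"
  unfolding polyfun_deg_def using real_fun.span_scale[of f _ c] by (simp add: fun_scale_def)

lemma polyfun_deg_const: "polyfun_deg m d (\<lambda>u. c)"
proof -
  have "(\<lambda>u. 1) \<in> monomial_fun m ` exponent_box m d"
    by (rule image_eqI[of _ _ "\<lambda>_. 0"]) (auto simp: monomial_fun_def exponent_box_def)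
  from polyfun_deg_scale[OF real_fun.span_base[OF this, folded polyfun_deg_def], of c]
  show ?thesis by simp
qed

lemma polyfun_deg_var: "j < m \<Longrightarrow> polyfun_deg m 1 (\<lambda>u. u j)"
proof -
  assume j: "j < m"
  have "(\<lambda>u. u j) = monomial_fun m (\<lambda>i. if i = j then 1 else 0)"
    using j by (simp add: monomial_fun_def fun_eq_iff if_distrib prod.delta cong: if_cong)
  moreover have "(\<lambda>i. if i = j then 1 else 0) \<in> exponent_box m 1"
    using j by (auto simp: exponent_box_def)
  ultimately show ?thesis
    unfolding polyfun_deg_def by (auto intro: real_fun.span_base)
qed

text \<open>Multiplication is bilinear, so it suffices to multiply spanning monomials.\<close>
lemma polyfun_deg_mult:
  assumes "polyfun_deg m a f" "polyfun_deg m b g"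
  shows "polyfun_deg m (a + b) (\<lambda>u. f u * g u)"
proof -
  have mon: "polyfun_deg m (a + b) (\<lambda>u. monomial_fun m \<beta> u * monomial_fun m \<gamma> u)"
    if "\<beta> \<in> exponent_box m a" "\<gamma> \<in> exponent_box m b" for \<beta> \<gamma>
  proof -
    have "(\<lambda>u. monomial_fun m \<beta> u * monomial_fun m \<gamma> u) = monomial_fun m (\<lambda>j. \<beta> j + \<gamma> j)"
      by (simp add: monomial_fun_def fun_eq_iff power_add prod.distrib)
    moreover have "(\<lambda>j. \<beta> j + \<gamma> j) \<in> exponent_box m (a + b)"
      using that by (auto simp: exponent_box_def add_mono)
    ultimately show ?thesis
      unfolding polyfun_deg_def by (auto intro: real_fun.span_base)
  qed
  have bilinear: "polyfun_deg m (a + b) (\<lambda>u. p u * q u)"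
    if "p \<in> real_fun.span P" "q \<in> real_fun.span R"
      and "\<And>x y. x \<in> P \<Longrightarrow> y \<in> R \<Longrightarrow> polyfun_deg m (a + b) (\<lambda>u. x u * y u)"
    for p q :: "(nat \<Rightarrow> real) \<Rightarrow> real" and P R
    using that(1)
  proof (induction rule: real_fun.span_induct_alt)
    case base
    show ?case using polyfun_deg_const[of m "a + b" 0] by simp
  next
    case (step c x p)
    have "polyfun_deg m (a + b) (\<lambda>u. x u * q u)"
      using that(2)
    proof (induction rule: real_fun.span_induct_alt)
      case base
      show ?case using polyfun_deg_const[of m "a + b" 0] by simp
    next
      case (step c' y q)
      then show ?case
        using polyfun_deg_add[OF polyfun_deg_scale[OF that(3)[OF \<open>x \<in> P\<close> \<open>y \<in> R\<close>], of c'] step(2)]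
        by (simp add: fun_scale_def algebra_simps)
    qed
    from polyfun_deg_add[OF polyfun_deg_scale[OF this, of c] step(2)] show ?case
      by (simp add: fun_scale_def algebra_simps)
  qed
  have "polyfun_deg m (a + b) (\<lambda>u. x u * y u)"
    if "x \<in> monomial_fun m ` exponent_box m a" "y \<in> monomial_fun m ` exponent_box m b" for x y
    using that mon by blast
  with assms show ?thesis
    unfolding polyfun_deg_def by (rule bilinear[unfolded polyfun_deg_def])
qed

lemma polyfun_deg_power: "polyfun_deg m d f \<Longrightarrow> polyfun_deg m (d * k) (\<lambda>u. f u ^ k)"
  by (induction k) (auto simp: polyfun_deg_const dest: polyfun_deg_mult)

lemma polyfun_deg_prod:
  "finite A \<Longrightarrow> (\<And>i. i \<in> A \<Longrightarrow> polyfun_deg m (d i) (f i)) \<Longrightarrow>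
     polyfun_deg m (\<Sum>i\<in>A. d i) (\<lambda>u. \<Prod>i\<in>A. f i u)"
  by (induction A rule: finite_induct) (auto simp: polyfun_deg_const dest: polyfun_deg_mult)

lemma polyfun_common_degree:
  "finite A \<Longrightarrow> (\<And>x. x \<in> A \<Longrightarrow> polyfun m (f x)) \<Longrightarrow> \<exists>d. \<forall>x\<in>A. polyfun_deg m d (f x)"
proof (induction A rule: finite_induct)
  case (insert a A)
  then obtain d d' where "\<forall>x\<in>A. polyfun_deg m d (f x)" "polyfun_deg m d' (f a)"
    unfolding polyfun_def by blast
  then have "\<forall>x\<in>insert a A. polyfun_deg m (max d d') (f x)"
    by (auto intro: polyfun_deg_mono)
  then show ?case ..
qed simp

lemma polyfun_deg_monomial_comp:
  assumes "\<alpha> \<in> exponent_box n e" and coords: "\<And>i. i < n \<Longrightarrow> polyfun_deg m d (\<lambda>u. F u i)"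
  shows "polyfun_deg m (n * d * e) (\<lambda>u. monomial_fun n \<alpha> (F u))"
proof -
  have "polyfun_deg m (\<Sum>i<n. d * \<alpha> i) (\<lambda>u. monomial_fun n \<alpha> (F u))"
    unfolding monomial_fun_def using coords by (intro polyfun_deg_prod polyfun_deg_power) auto
  moreover have "(\<Sum>i<n. d * \<alpha> i) \<le> (\<Sum>i<n. d * e)"
    using assms(1) by (intro sum_mono) (auto simp: exponent_box_def)
  then have "(\<Sum>i<n. d * \<alpha> i) \<le> n * d * e"
    by (simp add: mult.assoc mult.left_commute)
  ultimately show ?thesis
    by (rule polyfun_deg_mono)
qed

text \<open>Finitely many parameter spaces are glued into the disjoint union \<open>K \<times> \<real>\<^sup>m\<close>.\<close>
definition on_piece :: "'k \<Rightarrow> ((nat \<Rightarrow> real) \<Rightarrow> real) \<Rightarrow> 'k \<times> (nat \<Rightarrow> real) \<Rightarrow> real" where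
  "on_piece k h = (\<lambda>(k', u). if k' = k then h u else 0)"

lemma on_piece_in_span:
  assumes "polyfun_deg m d h" "k \<in> K"
  shows "on_piece k h \<in> real_fun.span ((\<lambda>(k, \<beta>). on_piece k (monomial_fun m \<beta>)) ` (K \<times> exponent_box m d))"
  using assms(1) unfolding polyfun_deg_def
proof (induction rule: real_fun.span_induct_alt)
  case base
  have "on_piece k 0 = 0" by (simp add: on_piece_def fun_eq_iff)
  then show ?case by (simp only: real_fun.span_zero)
next
  case (step c x y)
  then obtain \<beta> where "\<beta> \<in> exponent_box m d" "x = monomial_fun m \<beta>"
    by blast
  with assms(2) have x: "on_piece k x \<in> real_fun.span ((\<lambda>(k, \<beta>). on_piece k (monomial_fun m \<beta>)) ` (K \<times> exponent_box m d))"
    by (intro real_fun.span_base) auto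
  have "on_piece k (fun_scale c x + y) = fun_scale c (on_piece k x) + on_piece k y"
    by (simp add: on_piece_def fun_eq_iff fun_scale_def)
  then show ?case
    by (simp only:) (intro real_fun.span_add real_fun.span_scale x step(2))
qed

lemma sum_on_piece_apply: "finite K \<Longrightarrow> k \<in> K \<Longrightarrow> (\<Sum>k'\<in>K. on_piece k' (h k')) (k, u) = h k u"
  by (simp add: sum_fun_apply on_piece_def if_distrib[of "\<lambda>f. f u"] cong: if_cong)

lemma piece_count_lt_box_count:
  assumes "m < n" "e = r * (n * d + 1) ^ m"
  shows "r * (n * d * e + 1) ^ m < (e + 1 :: nat) ^ n"
proof -
  have "r * (n * d * e + 1) ^ m \<le> r * ((n * d + 1) * (e + 1)) ^ m"
    by (intro mult_le_mono2 power_mono) (auto simp: algebra_simps)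
  also have "\<dots> = e * (e + 1) ^ m"
    by (simp only: assms(2) power_mult_distrib mult.assoc)
  also have "\<dots> < (e + 1) ^ Suc m"
    by simp
  also have "\<dots> \<le> (e + 1) ^ n"
    using assms(1) by (intro power_increasing) auto
  finally show ?thesis .
qed

theorem polynomial_images_in_hypersurface:
  fixes F :: "'k \<Rightarrow> (nat \<Rightarrow> real) \<Rightarrow> nat \<Rightarrow> real"
  assumes "finite K" "m < n" and coords: "\<And>k i. k \<in> K \<Longrightarrow> i < n \<Longrightarrow> polyfun m (\<lambda>u. F k u i)"
  obtains e c where "\<exists>\<alpha>\<in>exponent_box n e. c \<alpha> \<noteq> 0"
    "\<And>k u. k \<in> K \<Longrightarrow> (\<Sum>\<alpha>\<in>exponent_box n e. c \<alpha> * monomial_fun n \<alpha> (F k u)) = 0"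
proof -
  have "\<exists>d. \<forall>x\<in>K \<times> {..<n}. polyfun_deg m d ((\<lambda>(k, i) u. F k u i) x)"
    by (rule polyfun_common_degree) (use assms(1) coords in auto)
  then obtain d where d0: "\<forall>x\<in>K \<times> {..<n}. polyfun_deg m d ((\<lambda>(k, i) u. F k u i) x)"
    by blast
  have d: "polyfun_deg m d (\<lambda>u. F k u i)" if "k \<in> K" "i < n" for k i
    using bspec[OF d0, of "(k, i)"] that by simp
  define e where "e = card K * (n * d + 1) ^ m"
  define S where "S = (\<lambda>(k, \<beta>). on_piece k (monomial_fun m \<beta>)) ` (K \<times> exponent_box m (n * d * e))"
  define g where "g \<alpha> = (\<Sum>k\<in>K. on_piece k (\<lambda>u. monomial_fun n \<alpha> (F k u)))" for \<alpha>
  have "finite S"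
    unfolding S_def by (simp add: assms(1) finite_exponent_box)
  have "card S \<le> card (K \<times> exponent_box m (n * d * e))"
    unfolding S_def by (rule card_image_le) (simp add: assms(1) finite_exponent_box)
  also have "\<dots> < card (exponent_box n e)"
    using piece_count_lt_box_count[OF assms(2) e_def]
    by (simp add: card_cartesian_product card_exponent_box)
  finally have card: "card S < card (exponent_box n e)" .
  have span: "g \<alpha> \<in> real_fun.span S" if "\<alpha> \<in> exponent_box n e" for \<alpha>
  proof -
    have "polyfun_deg m (n * d * e) (\<lambda>u. monomial_fun n \<alpha> (F k u))" if "k \<in> K" for k
      using that polyfun_deg_monomial_comp[OF \<open>\<alpha> \<in> exponent_box n e\<close>] d by blast
    then show ?thesis
      unfolding g_def S_def by (intro real_fun.span_sum on_piece_in_span)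
  qed
  obtain c where c: "\<exists>\<alpha>\<in>exponent_box n e. c \<alpha> \<noteq> 0"
    "\<And>x. (\<Sum>\<alpha>\<in>exponent_box n e. c \<alpha> * g \<alpha> x) = 0"
    using functions_in_small_span_dependent[where g = g, OF finite_exponent_box \<open>finite S\<close> card span] by blast
  have g: "g \<alpha> (k, u) = monomial_fun n \<alpha> (F k u)" if "k \<in> K" for \<alpha> k u
    unfolding g_def using assms(1) that by (rule sum_on_piece_apply)
  show thesis
  proof (rule that[OF c(1)])
    fix k u
    assume "k \<in> K"
    then have "(\<Sum>\<alpha>\<in>exponent_box n e. c \<alpha> * monomial_fun n \<alpha> (F k u))
        = (\<Sum>\<alpha>\<in>exponent_box n e. c \<alpha> * g \<alpha> (k, u))"
      by (simp add: g)
    also have "\<dots> = 0"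
      by (rule c(2))
    finally show "(\<Sum>\<alpha>\<in>exponent_box n e. c \<alpha> * monomial_fun n \<alpha> (F k u)) = 0" .
  qed
qed

section \<open>The parametrisation\<close>

lemma polyfun_const: "polyfun m (\<lambda>u. c)"
  using polyfun_deg_const unfolding polyfun_def by blast

lemma polyfun_var: "j < m \<Longrightarrow> polyfun m (\<lambda>u. u j)"
  using polyfun_deg_var unfolding polyfun_def by blast

lemma polyfun_add: "polyfun m f \<Longrightarrow> polyfun m g \<Longrightarrow> polyfun m (\<lambda>u. f u + g u)"
  unfolding polyfun_def
  by (metis polyfun_deg_add polyfun_deg_mono max.cobounded1 max.cobounded2)

lemma polyfun_mult: "polyfun m f \<Longrightarrow> polyfun m g \<Longrightarrow> polyfun m (\<lambda>u. f u * g u)"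
  unfolding polyfun_def by (blast intro: polyfun_deg_mult)

lemma polyfun_scale: "polyfun m f \<Longrightarrow> polyfun m (\<lambda>u. c * f u)"
  by (rule polyfun_mult[OF polyfun_const])

lemma polyfun_divide: "polyfun m f \<Longrightarrow> polyfun m (\<lambda>u. f u / c)"
  using polyfun_scale[of m f "1 / c"] by simp

lemma polyfun_minus: "polyfun m f \<Longrightarrow> polyfun m (\<lambda>u. - f u)"
  using polyfun_scale[of m f "-1"] by simp

lemma polyfun_sum: "(\<And>i. i \<in> A \<Longrightarrow> polyfun m (f i)) \<Longrightarrow> polyfun m (\<lambda>u. \<Sum>i\<in>A. f i u)"
  by (induction A rule: infinite_finite_induct) (auto intro: polyfun_const polyfun_add)

definition polyfun_poly :: "nat \<Rightarrow> ((nat \<Rightarrow> real) \<Rightarrow> real poly) \<Rightarrow> bool" where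
  "polyfun_poly m P \<longleftrightarrow> (\<forall>j. polyfun m (\<lambda>u. coeff (P u) j))"

lemma polyfun_poly_zero: "polyfun_poly m (\<lambda>u. 0)"
  unfolding polyfun_poly_def by (simp add: polyfun_const)

lemma polyfun_poly_pCons:
  assumes "polyfun m a" "polyfun_poly m P"
  shows "polyfun_poly m (\<lambda>u. pCons (a u) (P u))"
  unfolding polyfun_poly_def
proof
  fix j
  show "polyfun m (\<lambda>u. coeff (pCons (a u) (P u)) j)"
    using assms by (cases j) (simp_all add: polyfun_poly_def)
qed

lemma polyfun_poly_add:
  "polyfun_poly m P \<Longrightarrow> polyfun_poly m Q \<Longrightarrow> polyfun_poly m (\<lambda>u. P u + Q u)"
  unfolding polyfun_poly_def by (simp add: polyfun_add)

lemma polyfun_poly_smult: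
  "polyfun m c \<Longrightarrow> polyfun_poly m P \<Longrightarrow> polyfun_poly m (\<lambda>u. smult (c u) (P u))"
  unfolding polyfun_poly_def by (simp add: polyfun_mult)

lemma polyfun_poly_mult:
  "polyfun_poly m P \<Longrightarrow> polyfun_poly m Q \<Longrightarrow> polyfun_poly m (\<lambda>u. P u * Q u)"
  unfolding polyfun_poly_def coeff_mult by (intro allI polyfun_sum polyfun_mult) auto

lemma polyfun_poly_power:
  "polyfun_poly m P \<Longrightarrow> polyfun_poly m (\<lambda>u. P u ^ k)"
  by (induction k) (auto intro: polyfun_poly_mult polyfun_poly_pCons polyfun_poly_zero polyfun_const
                         simp: one_pCons)

lemmas polyfun_poly_intros =
  polyfun_poly_zero polyfun_poly_pCons polyfun_poly_add polyfun_poly_smult polyfun_poly_mult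
  polyfun_poly_power polyfun_const polyfun_var polyfun_divide polyfun_minus

text \<open>Inverts \<open>(f2, f3, f4) \<mapsto> (A, B, C)\<close> with \<open>A = f2 - t X\<close>, \<open>B = 4 f4 - X\<^sup>2\<close>, \<open>C = f3\<close>.\<close>
definition triple_of :: "real \<Rightarrow> real poly \<Rightarrow> real poly \<Rightarrow> real poly \<Rightarrow> real poly \<Rightarrow>
    real poly \<times> real poly \<times> real poly" where
  "triple_of t X A B C = (A + smult t X, C, smult (1/4) (B + X\<^sup>2))"

text \<open>The three shapes of a triple in T: \<open>A = (-1)\<^sup>k (K\<^sup>2 + L\<^sup>2)\<close> for \<open>k = 0, 1\<close> and \<open>A = Q\<close>
  for \<open>k = 2\<close>.\<close>
definition param :: "nat \<Rightarrow> (nat \<Rightarrow> real) \<Rightarrow> real poly \<times> real poly \<times> real poly" where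
  "param k u =
     (let t = u 0; K = [:u 1, u 2:]; L = [:u 3, u 4:]; S = [:u 5, u 6:]; Q = [:u 8, u 9, u 10:];
          X = smult (- t / 2) (S\<^sup>2) + smult (u 7) Q
      in if k = 2 then triple_of t X Q (Q * (K\<^sup>2 + L\<^sup>2)) (Q * K)
         else let A = smult ((-1) ^ k) (K\<^sup>2 + L\<^sup>2)
              in triple_of t X A (S\<^sup>2 * A + smult 2 (S * K * Q) + smult ((-1) ^ k) (Q\<^sup>2)) (S * A + Q * K))"

lemma polyfun_poly_param:
  "polyfun_poly 11 (\<lambda>u. fst (param k u)) \<and> polyfun_poly 11 (\<lambda>u. fst (snd (param k u))) \<and>
   polyfun_poly 11 (\<lambda>u. snd (snd (param k u)))"
proof (cases "k = 2")
  case True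
  then show ?thesis
    unfolding param_def triple_of_def Let_def if_P[OF True] fst_conv snd_conv
    by (intro conjI polyfun_poly_intros) simp_all
next
  case False
  then show ?thesis
    unfolding param_def triple_of_def Let_def if_not_P[OF False] fst_conv snd_conv
    by (intro conjI polyfun_poly_intros) simp_all
qed

section \<open>Real quadratic divisors\<close>

lemma linear_poly_eq: "degree (p :: 'a::zero poly) \<le> 1 \<Longrightarrow> p = [:coeff p 0, coeff p 1:]"
  by (rule poly_eqI) (auto simp: coeff_pCons coeff_eq_0 split: nat.split)

lemma quadratic_poly_eq: "degree (p :: 'a::zero poly) \<le> 2 \<Longrightarrow> p = [:coeff p 0, coeff p 1, coeff p 2:]"
  by (rule poly_eqI) (auto simp: coeff_pCons coeff_eq_0 numeral_2_eq_2 split: nat.split)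

lemma dvd_imp_quotient_degree_le:
  fixes P Q :: "'a::idom poly"
  assumes "Q dvd P" "Q \<noteq> 0" "degree P \<le> n + degree Q"
  obtains D where "P = Q * D" "degree D \<le> n"
proof -
  from assms(1) obtain D where D: "P = Q * D"
    by (elim dvdE)
  have "degree D \<le> n"
  proof (cases "D = 0")
    case False
    with D assms(2,3) show ?thesis
      by (simp add: degree_mult_eq)
  qed simp
  with D show thesis
    by (rule that)
qed

lemma dvd_imp_smult:
  fixes P Q :: "'a::field poly"
  assumes "Q dvd P" "Q \<noteq> 0" "degree P \<le> degree Q"
  obtains c where "P = smult c Q"
proof -
  obtain D where "P = Q * D" "degree D \<le> 0"
    using dvd_imp_quotient_degree_le[OF assms(1,2), of 0] assms(3) by auto
  moreover from this(2) obtain c where "D = [:c:]"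
    using degree0_coeffs by blast
  ultimately show thesis
    using that[of c] by simp
qed

lemma sum_of_squares_eq_0_iff: "(K :: real poly)\<^sup>2 + L\<^sup>2 = 0 \<longleftrightarrow> K = 0 \<and> L = 0"
proof
  assume sq: "K\<^sup>2 + L\<^sup>2 = 0"
  have "poly K x = 0 \<and> poly L x = 0" for x
    using arg_cong[OF sq, of "\<lambda>p. poly p x"] by (simp add: add_nonneg_eq_0_iff)
  then show "K = 0 \<and> L = 0"
    using poly_all_0_iff_0 by blast
qed simp

lemma irreducible_quadratic_without_root:
  fixes p :: "'a::field poly"
  assumes "degree p = 2" "\<And>x. poly p x \<noteq> 0"
  shows "irreducible p"
proof (rule irreducibleI)
  show "p \<noteq> 0"
    using assms(1) by auto
  then show "\<not> is_unit p"
    using assms(1) by (simp add: is_unit_iff_degree)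
  fix q r
  assume p: "p = q * r"
  show "is_unit q \<or> is_unit r"
  proof (rule ccontr)
    assume "\<not> (is_unit q \<or> is_unit r)"
    moreover have "q \<noteq> 0" "r \<noteq> 0"
      using p assms(1) by auto
    ultimately have "degree q \<noteq> 0" "degree r \<noteq> 0"
      by (auto simp: is_unit_iff_degree)
    moreover have "degree q + degree r = 2"
      using p assms(1) \<open>q \<noteq> 0\<close> \<open>r \<noteq> 0\<close> by (simp add: degree_mult_eq)
    ultimately have "degree q = 1"
      by linarith
    then obtain a b where "q = [:b, a:]" "a \<noteq> 0"
      by (rule degree1_coeffs)
    then have "poly p (- b / a) = 0"
      by (simp add: p)
    with assms(2) show False
      by blast
  qed
qed

lemma prime_elem_quadratic:
  fixes a b c :: real
  assumes "a \<noteq> 0" "b\<^sup>2 < 4 * a * c"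
  shows "prime_elem [:c, b, a:]"
proof (rule field_poly_irreducible_imp_prime, rule irreducible_quadratic_without_root)
  show "degree [:c, b, a:] = 2"
    using assms(1) by simp
  fix x
  have "(2 * a * x + b)\<^sup>2 + (4 * a * c - b\<^sup>2) = 4 * a * poly [:c, b, a:] x"
    by (simp add: power2_eq_square algebra_simps)
  with assms show "poly [:c, b, a:] x \<noteq> 0"
    by (smt (verit) mult_eq_0_iff zero_le_power2)
qed

lemma real_combination_of_nonreal_eq_0:
  assumes "Im z \<noteq> 0" "of_real r0 + of_real r1 * z = 0"
  shows "r0 = 0 \<and> r1 = 0"
  using arg_cong[OF assms(2), of Im] arg_cong[OF assms(2), of Re] assms(1) by simp

lemma nonreal_root_of_quadratic:
  fixes a b c :: real
  assumes a: "a \<noteq> 0" and disc: "b\<^sup>2 < 4 * a * c"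
  obtains z where "Im z \<noteq> 0" "of_real c + of_real b * z + of_real a * z\<^sup>2 = 0"
proof
  define s where "s = sqrt (4 * a * c - b\<^sup>2)"
  have s: "s\<^sup>2 = 4 * a * c - b\<^sup>2" "s > 0"
    using disc by (simp_all add: s_def)
  define z where "z = Complex (- b / (2 * a)) (s / (2 * a))"
  show "Im z \<noteq> 0"
    using a s(2) by (simp add: z_def)
  show "of_real c + of_real b * z + of_real a * z\<^sup>2 = 0"
  proof (rule complex_eqI)
    have "Re (of_real c + of_real b * z + of_real a * z\<^sup>2) = (4 * a * c - b\<^sup>2 - s\<^sup>2) / (4 * a)"
      using a by (simp add: z_def power2_eq_square field_simps)
    then show "Re (of_real c + of_real b * z + of_real a * z\<^sup>2) = Re 0"
      using s(1) by simp
    show "Im (of_real c + of_real b * z + of_real a * z\<^sup>2) = Im 0"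
      using a by (simp add: z_def power2_eq_square field_simps)
  qed
qed

text \<open>Modulo an irreducible real quadratic Q every polynomial is a square up to any nonzero
  factor r, since the residue ring is \<open>\<complex>\<close>: with z a non-real root of Q, take a complex
  square root \<open>\<beta> + \<alpha> z\<close> of \<open>X(z)/r\<close>; then \<open>X - r (\<beta> + \<alpha> x)\<^sup>2\<close> vanishes at z.\<close>
lemma congruent_to_square_mod_quadratic:
  fixes a b c r :: real and X :: "real poly"
  assumes a: "a \<noteq> 0" and disc: "b\<^sup>2 < 4 * a * c" and r: "r \<noteq> 0" and deg: "degree X \<le> 2"
  obtains S \<mu> where "degree S \<le> 1" "X = smult r (S\<^sup>2) + smult \<mu> [:c, b, a:]"
proof -
  obtain z where Imz: "Im z \<noteq> 0" and root: "of_real c + of_real b * z + of_real a * z\<^sup>2 = 0"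
    using nonreal_root_of_quadratic[OF a disc] .
  define x0 x1 x2 where "x0 = coeff X 0" and "x1 = coeff X 1" and "x2 = coeff X 2"
  have X: "X = [:x0, x1, x2:]"
    unfolding x0_def x1_def x2_def by (rule quadratic_poly_eq[OF deg])
  define w where "w = csqrt ((of_real x0 + of_real x1 * z + of_real x2 * z\<^sup>2) / of_real r)"
  define \<alpha> where "\<alpha> = Im w / Im z"
  define \<beta> where "\<beta> = Re w - \<alpha> * Re z"
  have w: "of_real \<beta> + of_real \<alpha> * z = w"
    by (rule complex_eqI) (use Imz in \<open>simp_all add: \<alpha>_def \<beta>_def\<close>)
  define p0 p1 p2 where "p0 = x0 - r * \<beta>\<^sup>2" and "p1 = x1 - 2 * r * \<alpha> * \<beta>" and "p2 = x2 - r * \<alpha>\<^sup>2"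
  have "of_real p0 + of_real p1 * z + of_real p2 * z\<^sup>2
      = (of_real x0 + of_real x1 * z + of_real x2 * z\<^sup>2) - of_real r * (of_real \<beta> + of_real \<alpha> * z)\<^sup>2"
    by (simp add: p0_def p1_def p2_def power2_eq_square algebra_simps)
  also have "\<dots> = 0"
    using r by (simp add: w w_def)
  finally have ev: "of_real p0 + of_real p1 * z + of_real p2 * z\<^sup>2 = 0" .
  have "of_real (p0 - p2 / a * c) + of_real (p1 - p2 / a * b) * z
      = (of_real p0 + of_real p1 * z + of_real p2 * z\<^sup>2) - of_real (p2 / a) * (of_real c + of_real b * z + of_real a * z\<^sup>2)"
    using a by (simp add: field_simps)
  also have "\<dots> = 0"
    using ev root by simp
  finally have "p0 - p2 / a * c = 0 \<and> p1 - p2 / a * b = 0"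
    by (rule real_combination_of_nonreal_eq_0[OF Imz])
  then have "X = smult r ([:\<beta>, \<alpha>:]\<^sup>2) + smult (p2 / a) [:c, b, a:]"
    using a unfolding X by (simp add: p0_def p1_def p2_def power2_eq_square field_simps)
  then show thesis
    by (rule that[rotated]) simp
qed

section \<open>Normal form modulo the quadratic divisor\<close>

lemma smult_as_mult: "smult c p = [:c:] * p"
  by simp

lemma param_vector_exists:
  fixes K L S Q :: "real poly"
  assumes "degree K \<le> 1" "degree L \<le> 1" "degree S \<le> 1" "degree Q \<le> 2"
  obtains u :: "nat \<Rightarrow> real" where "u 0 = t" "[:u 1, u 2:] = K" "[:u 3, u 4:] = L" "[:u 5, u 6:] = S"
    "u 7 = \<mu>" "[:u 8, u 9, u 10:] = Q"
proof -
  define u :: "nat \<Rightarrow> real" where "u = (\<lambda>_. 0)(0 := t, 1 := coeff K 0, 2 := coeff K 1,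
    3 := coeff L 0, 4 := coeff L 1, 5 := coeff S 0, 6 := coeff S 1, 7 := \<mu>,
    8 := coeff Q 0, 9 := coeff Q 1, 10 := coeff Q 2)"
  show thesis
  proof (rule that)
    show "u 0 = t" "u 7 = \<mu>"
      by (simp_all add: u_def)
    show "[:u 1, u 2:] = K" "[:u 3, u 4:] = L" "[:u 5, u 6:] = S"
      using assms(1-3)[THEN linear_poly_eq, symmetric] by (simp_all add: u_def)
    show "[:u 8, u 9, u 10:] = Q"
      using quadratic_poly_eq[OF assms(4), symmetric] by (simp add: u_def)
  qed
qed

lemma param_sum_of_squares_shape:
  fixes K L S Q :: "real poly"
  assumes "degree K \<le> 1" "degree L \<le> 1" "degree S \<le> 1" "degree Q \<le> 2" "k < 2"
  defines "A \<equiv> smult ((-1) ^ k) (K\<^sup>2 + L\<^sup>2)"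
  shows "\<exists>u. param k u = triple_of t (smult (- t / 2) (S\<^sup>2) + smult \<mu> Q) A
           (S\<^sup>2 * A + smult 2 (S * K * Q) + smult ((-1) ^ k) (Q\<^sup>2)) (S * A + Q * K)"
proof -
  obtain u :: "nat \<Rightarrow> real" where "u 0 = t" "[:u 1, u 2:] = K" "[:u 3, u 4:] = L" "[:u 5, u 6:] = S" "u 7 = \<mu>"
    "[:u 8, u 9, u 10:] = Q"
    by (rule param_vector_exists[OF assms(1-4)])
  with assms(5) show ?thesis
    unfolding A_def by (intro exI[of _ u]) (simp add: param_def Let_def)
qed

lemma param_quadratic_shape:
  fixes K L S Q :: "real poly"
  assumes "degree K \<le> 1" "degree L \<le> 1" "degree S \<le> 1" "degree Q \<le> 2"
  shows "\<exists>u. param 2 u = triple_of t (smult (- t / 2) (S\<^sup>2) + smult \<mu> Q) Q (Q * (K\<^sup>2 + L\<^sup>2)) (Q * K)"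
proof -
  obtain u :: "nat \<Rightarrow> real" where "u 0 = t" "[:u 1, u 2:] = K" "[:u 3, u 4:] = L" "[:u 5, u 6:] = S" "u 7 = \<mu>"
    "[:u 8, u 9, u 10:] = Q"
    by (rule param_vector_exists[OF assms])
  then show ?thesis
    by (intro exI[of _ u]) (simp add: param_def Let_def)
qed

lemma sum_of_squares_shape_in_param_image:
  fixes K L S Q :: "real poly"
  assumes deg: "degree K \<le> 1" "degree L \<le> 1" "degree S \<le> 1" "degree Q \<le> 2" and "\<tau> \<noteq> 0"
  defines "A \<equiv> smult \<tau> (K\<^sup>2 + L\<^sup>2)"
  shows "\<exists>k<3. \<exists>u. param k u = triple_of t (smult (- t / 2) (S\<^sup>2) + smult \<mu> Q) A
           (S\<^sup>2 * A + smult 2 (S * K * Q) + smult (1 / \<tau>) (Q\<^sup>2)) (S * A + Q * K)"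
proof -
  define k :: nat where "k = (if \<tau> > 0 then 0 else 1)"
  define \<rho> where "\<rho> = sqrt \<bar>\<tau>\<bar>"
  \<comment> \<open>\<open>\<tau> = \<plusminus>\<rho>\<^sup>2\<close>, and \<rho> is absorbed into K, L and Q\<close>
  have "\<rho> > 0" and \<tau>: "\<tau> = (-1) ^ k * \<rho>\<^sup>2"
    using \<open>\<tau> \<noteq> 0\<close> by (auto simp: \<rho>_def k_def abs_if)
  then have \<rho>: "(-1) ^ k / \<rho>\<^sup>2 = 1 / \<tau>"
    by (auto simp: k_def)
  let ?K = "smult \<rho> K" and ?L = "smult \<rho> L" and ?Q = "smult (1 / \<rho>) Q"
  let ?A = "smult ((-1) ^ k) (?K\<^sup>2 + ?L\<^sup>2)"
  have "\<exists>u. param k u = triple_of t (smult (- t / 2) (S\<^sup>2) + smult (\<rho> * \<mu>) ?Q) ?A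
      (S\<^sup>2 * ?A + smult 2 (S * ?K * ?Q) + smult ((-1) ^ k) (?Q\<^sup>2)) (S * ?A + ?Q * ?K)"
    by (rule param_sum_of_squares_shape) (use deg in \<open>simp_all add: k_def\<close>)
  moreover have "?A = A"
    by (simp add: A_def \<tau> smult_power smult_add_right)
  moreover have "smult (\<rho> * \<mu>) ?Q = smult \<mu> Q" "?Q * ?K = Q * K"
    using \<open>\<rho> > 0\<close> by simp_all
  moreover have "smult 2 (S * ?K * ?Q) + smult ((-1) ^ k) (?Q\<^sup>2) = smult 2 (S * K * Q) + smult (1 / \<tau>) (Q\<^sup>2)"
    using \<open>\<rho> > 0\<close> \<rho> by (simp add: smult_power power_one_over)
  ultimately have "\<exists>u. param k u = triple_of t (smult (- t / 2) (S\<^sup>2) + smult \<mu> Q) A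
      (S\<^sup>2 * A + smult 2 (S * K * Q) + smult (1 / \<tau>) (Q\<^sup>2)) (S * A + Q * K)"
    by (simp only: add.assoc)
  moreover have "k < 3"
    by (simp add: k_def)
  ultimately show ?thesis
    by blast
qed

lemma quadratic_factor_shape_in_param_image:
  fixes K L S Q :: "real poly"
  assumes deg: "degree K \<le> 1" "degree L \<le> 1" "degree S \<le> 1" "degree Q \<le> 2" and "\<alpha> \<noteq> 0"
  shows "\<exists>k<3. \<exists>u. param k u = triple_of t (smult (- t / 2) (S\<^sup>2) + smult \<mu> Q) (smult \<alpha> Q)
           (smult (1 / \<alpha>) (Q * ((K + smult \<alpha> S)\<^sup>2 + L\<^sup>2))) (S * smult \<alpha> Q + Q * K)"
proof -
  let ?M = "smult (1 / \<alpha>) (K + smult \<alpha> S)" and ?L = "smult (1 / \<alpha>) L" and ?Q = "smult \<alpha> Q"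
  have "\<exists>u. param 2 u = triple_of t (smult (- t / 2) (S\<^sup>2) + smult (\<mu> / \<alpha>) ?Q) ?Q
      (?Q * (?M\<^sup>2 + ?L\<^sup>2)) (?Q * ?M)"
    by (rule param_quadratic_shape) (use deg in \<open>simp_all add: degree_add_le\<close>)
  moreover have "smult (\<mu> / \<alpha>) ?Q = smult \<mu> Q"
    using \<open>\<alpha> \<noteq> 0\<close> by simp
  moreover have "[:\<alpha>:] * [:1 / \<alpha>:] = 1"
    using \<open>\<alpha> \<noteq> 0\<close> by simp
  then have "?Q * (?M\<^sup>2 + ?L\<^sup>2) = smult (1 / \<alpha>) (Q * ((K + smult \<alpha> S)\<^sup>2 + L\<^sup>2))"
    "?Q * ?M = S * smult \<alpha> Q + Q * K"
    unfolding smult_as_mult by algebra+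
  ultimately have "\<exists>u. param 2 u = triple_of t (smult (- t / 2) (S\<^sup>2) + smult \<mu> Q) (smult \<alpha> Q)
      (smult (1 / \<alpha>) (Q * ((K + smult \<alpha> S)\<^sup>2 + L\<^sup>2))) (S * smult \<alpha> Q + Q * K)"
    by (simp only:)
  then show ?thesis
    by (intro exI[of _ 2]) simp
qed

lemma twice_square_plus_multiple:
  fixes X S Q :: "real poly"
  assumes "X = smult (- t / 2) (S\<^sup>2) + smult \<mu> Q"
  shows "2 * X = 2 * [:\<mu>:] * Q - [:t:] * S\<^sup>2"
  using assms by (simp add: numeral_poly smult_add_right smult_diff_right mult.commute)

lemma dvd_difference_for_some_sign:
  fixes A B C X S\<^sub>0 Q :: "real poly"
  assumes "prime_elem Q" "t \<noteq> 0" "X = smult (- t / 2) (S\<^sub>0\<^sup>2) + smult \<mu> Q"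
    "Q dvd smult t B + 2 * X * A" "Q dvd A * B - C\<^sup>2"
  obtains S where "S = S\<^sub>0 \<or> S = - S\<^sub>0" "Q dvd C - S * A"
proof -
  have "[:t:] * ((C - S\<^sub>0 * A) * (C + S\<^sub>0 * A))
      = A * ([:t:] * B + 2 * X * A) - [:t:] * (A * B - C\<^sup>2) - 2 * [:\<mu>:] * A\<^sup>2 * Q"
    using twice_square_plus_multiple[OF assms(3)] by algebra
  moreover have "Q dvd A * ([:t:] * B + 2 * X * A)" "Q dvd [:t:] * (A * B - C\<^sup>2)"
    using assms(4,5) by (simp_all add: dvd_mult dvd_smult)
  then have "Q dvd A * ([:t:] * B + 2 * X * A) - [:t:] * (A * B - C\<^sup>2) - 2 * [:\<mu>:] * A\<^sup>2 * Q"
    by (intro dvd_diff) (simp_all add: dvd_smult)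
  ultimately have "Q dvd [:t:] * ((C - S\<^sub>0 * A) * (C + S\<^sub>0 * A))"
    by simp
  with assms(2) have "Q dvd (C - S\<^sub>0 * A) * (C - (- S\<^sub>0) * A)"
    by (simp add: dvd_smult_iff)
  with assms(1) that show thesis
    by (metis prime_elem_dvd_mult_iff)
qed

lemma key_identity:
  fixes A B C X E L R S K Q :: "real poly"
  assumes "Q \<noteq> 0" "E = Q * L" "E\<^sup>2 = A * B - C\<^sup>2" "smult t B + 2 * X * A = Q * R"
    "X = smult (- t / 2) (S\<^sup>2) + smult \<mu> Q" "C = S * A + Q * K"
  shows "A * (R - smult (2 * \<mu>) A - smult (2 * t) (S * K)) = smult t (Q * (K\<^sup>2 + L\<^sup>2))"
proof -
  have "[:t:] * B + 2 * X * A = Q * R"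
    using assms(4) by simp
  then have "Q * (A * (R - 2 * [:\<mu>:] * A - 2 * [:t:] * (S * K))) = Q * ([:t:] * (Q * (K\<^sup>2 + L\<^sup>2)))"
    using assms(2,3,6) twice_square_plus_multiple[OF assms(5)] by algebra
  then have "A * (R - 2 * [:\<mu>:] * A - 2 * [:t:] * (S * K)) = [:t:] * (Q * (K\<^sup>2 + L\<^sup>2))"
    by (simp only: mult_left_cancel[OF assms(1)])
  then show ?thesis
    by (simp add: numeral_poly mult.commute)
qed

lemma sum_of_squares_case:
  fixes A B C X R S K L Q :: "real poly"
  assumes t: "t \<noteq> 0" and L: "L \<noteq> 0" and Q: "Q \<noteq> 0"
    and deg: "degree K \<le> 1" "degree L \<le> 1" "degree S \<le> 1" "degree Q \<le> 2"
    and R: "smult t B + 2 * X * A = Q * R" and X: "X = smult (- t / 2) (S\<^sup>2) + smult \<mu> Q"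
    and C: "C = S * A + Q * K"
    and key: "A * (R - smult (2 * \<mu>) A - smult (2 * t) (S * K)) = smult t (Q * (K\<^sup>2 + L\<^sup>2))"
    and W: "R - smult (2 * \<mu>) A - smult (2 * t) (S * K) = smult \<nu> Q"
  shows "\<exists>k<3. \<exists>u. param k u = triple_of t X A B C"
proof -
  have "Q * smult \<nu> A = Q * smult t (K\<^sup>2 + L\<^sup>2)"
    using key unfolding W by (simp add: ac_simps)
  then have \<nu>A: "smult \<nu> A = smult t (K\<^sup>2 + L\<^sup>2)"
    by (simp only: mult_left_cancel[OF Q])
  have "\<nu> \<noteq> 0"
    using \<nu>A t L by (auto simp: sum_of_squares_eq_0_iff)
  define \<tau> where "\<tau> = t / \<nu>"
  have A: "A = smult \<tau> (K\<^sup>2 + L\<^sup>2)"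
    using arg_cong[OF \<nu>A, of "smult (1 / \<nu>)"] \<open>\<nu> \<noteq> 0\<close> by (simp add: \<tau>_def)
  have "[:t:] * B = [:\<nu>:] * Q\<^sup>2 + 2 * [:t:] * S * K * Q + [:t:] * S\<^sup>2 * A"
  proof -
    have "[:t:] * B + 2 * X * A = Q * R" "R = [:\<nu>:] * Q + 2 * [:\<mu>:] * A + 2 * [:t:] * (S * K)"
      using R W by (simp_all add: numeral_poly algebra_simps)
    then show ?thesis
      using twice_square_plus_multiple[OF X] by algebra
  qed
  then have "smult (1 / t) ([:t:] * B) = smult (1 / t) ([:\<nu>:] * Q\<^sup>2 + 2 * [:t:] * S * K * Q + [:t:] * S\<^sup>2 * A)"
    by simp
  then have B: "B = S\<^sup>2 * A + smult 2 (S * K * Q) + smult (1 / \<tau>) (Q\<^sup>2)"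
    using t by (simp add: \<tau>_def numeral_poly smult_add_right algebra_simps)
  have "\<tau> \<noteq> 0"
    using \<open>\<nu> \<noteq> 0\<close> t by (simp add: \<tau>_def)
  from sum_of_squares_shape_in_param_image[OF deg this, of t \<mu>] show ?thesis
    by (simp only: X B C A)
qed

lemma quadratic_factor_case:
  fixes A B C X R S K L Q :: "real poly"
  assumes t: "t \<noteq> 0" and L: "L \<noteq> 0" and Q: "Q \<noteq> 0"
    and deg: "degree K \<le> 1" "degree L \<le> 1" "degree S \<le> 1" "degree Q \<le> 2"
    and R: "smult t B + 2 * X * A = Q * R" and X: "X = smult (- t / 2) (S\<^sup>2) + smult \<mu> Q"
    and C: "C = S * A + Q * K"
    and key: "A * (R - smult (2 * \<mu>) A - smult (2 * t) (S * K)) = smult t (Q * (K\<^sup>2 + L\<^sup>2))"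
    and A: "A = smult \<alpha> Q"
  shows "\<exists>k<3. \<exists>u. param k u = triple_of t X A B C"
proof -
  define W where "W = R - smult (2 * \<mu>) A - smult (2 * t) (S * K)"
  have "Q * smult \<alpha> W = Q * smult t (K\<^sup>2 + L\<^sup>2)"
    using key unfolding W_def[symmetric] unfolding A by (simp add: ac_simps)
  then have \<alpha>W: "smult \<alpha> W = smult t (K\<^sup>2 + L\<^sup>2)"
    by (simp only: mult_left_cancel[OF Q])
  have "\<alpha> \<noteq> 0"
    using \<alpha>W t L by (auto simp: sum_of_squares_eq_0_iff)
  have "[:\<alpha>:] * ([:t:] * B) = [:t:] * (Q * ((K + [:\<alpha>:] * S)\<^sup>2 + L\<^sup>2))"
  proof -
    have "[:t:] * B + 2 * X * A = Q * R" "[:\<alpha>:] * W = [:t:] * (K\<^sup>2 + L\<^sup>2)" "A = [:\<alpha>:] * Q"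
      using R \<alpha>W A by simp_all
    moreover have "R = W + 2 * [:\<mu>:] * A + 2 * [:t:] * (S * K)"
      by (simp add: W_def numeral_poly mult.commute)
    ultimately show ?thesis
      using twice_square_plus_multiple[OF X] by algebra
  qed
  then have \<alpha>tB: "smult (\<alpha> * t) B = smult t (Q * ((K + smult \<alpha> S)\<^sup>2 + L\<^sup>2))"
    by (simp add: mult.commute)
  have B: "B = smult (1 / \<alpha>) (Q * ((K + smult \<alpha> S)\<^sup>2 + L\<^sup>2))"
  proof -
    have "B = smult (1 / (\<alpha> * t)) (smult (\<alpha> * t) B)"
      using \<open>\<alpha> \<noteq> 0\<close> t by simp
    also have "\<dots> = smult (1 / \<alpha>) (Q * ((K + smult \<alpha> S)\<^sup>2 + L\<^sup>2))"
      unfolding \<alpha>tB using t by simp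
    finally show ?thesis .
  qed
  from quadratic_factor_shape_in_param_image[OF deg \<open>\<alpha> \<noteq> 0\<close>, of t \<mu>] show ?thesis
    by (simp only: X B C A)
qed

lemma degree_mult_le_add: "degree p \<le> m \<Longrightarrow> degree q \<le> n \<Longrightarrow> degree (p * q) \<le> m + n"
  by (rule order.trans[OF degree_mult_le]) simp

lemma quadratic_divisor_normal_form:
  fixes A B C X E :: "real poly" and a b c t :: real
  assumes a: "a \<noteq> 0" and disc: "b\<^sup>2 < 4 * a * c" and t: "t \<noteq> 0"
    and deg: "degree A \<le> 2" "degree B \<le> 4" "degree C \<le> 3" "degree X \<le> 2" "degree E \<le> 3"
    and "E \<noteq> 0" and E: "E\<^sup>2 = A * B - C\<^sup>2"
    and Q: "Q = [:c, b, a:]" and dvd_g: "Q dvd A * B - C\<^sup>2" and dvd_h: "Q dvd smult t B + 2 * X * A"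
  obtains L R S \<mu> K where "degree L \<le> 1" "degree R \<le> 2" "degree S \<le> 1" "degree K \<le> 1" "L \<noteq> 0"
    "smult t B + 2 * X * A = Q * R" "X = smult (- t / 2) (S\<^sup>2) + smult \<mu> Q" "C = S * A + Q * K"
    "A * (R - smult (2 * \<mu>) A - smult (2 * t) (S * K)) = smult t (Q * (K\<^sup>2 + L\<^sup>2))"
proof -
  have "prime_elem Q" "degree Q = 2" "Q \<noteq> 0"
    using prime_elem_quadratic[OF a disc] a by (auto simp: Q)
  have "Q dvd E"
    using dvd_g prime_elem_dvd_power[OF \<open>prime_elem Q\<close>] by (simp flip: E)
  then obtain L where L: "E = Q * L" "degree L \<le> 1"
    using dvd_imp_quotient_degree_le[OF _ \<open>Q \<noteq> 0\<close>, of E 1] \<open>degree Q = 2\<close> deg(5) by auto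
  have "degree (2 * X) \<le> 2"
    using degree_mult_le[of 2 X] deg(4) by (simp add: degree_numeral)
  then have "degree (2 * X * A) \<le> 4"
    using degree_mult_le_add[OF _ deg(1)] by fastforce
  then have "degree (smult t B + 2 * X * A) \<le> 2 + degree Q"
    using degree_smult_le[of t B] deg(2) \<open>degree Q = 2\<close> by (auto intro: degree_add_le)
  then obtain R where R: "smult t B + 2 * X * A = Q * R" "degree R \<le> 2"
    using dvd_h \<open>Q \<noteq> 0\<close> by (elim dvd_imp_quotient_degree_le)
  obtain S\<^sub>0 \<mu> where "degree S\<^sub>0 \<le> 1" and X0: "X = smult (- t / 2) (S\<^sub>0\<^sup>2) + smult \<mu> Q"
    using congruent_to_square_mod_quadratic[OF a disc _ deg(4), of "- t / 2"] t by (auto simp: Q)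
  obtain S where "S = S\<^sub>0 \<or> S = - S\<^sub>0" and SA: "Q dvd C - S * A"
    using dvd_difference_for_some_sign[OF \<open>prime_elem Q\<close> t X0 dvd_h dvd_g] by blast
  then have S: "degree S \<le> 1" "X = smult (- t / 2) (S\<^sup>2) + smult \<mu> Q"
    using \<open>degree S\<^sub>0 \<le> 1\<close> X0 by auto
  have "degree (C - S * A) \<le> 1 + degree Q"
    using \<open>degree Q = 2\<close> deg(1,3) degree_mult_le_add[OF S(1) deg(1)] by (auto intro: degree_diff_le)
  then obtain K where "C - S * A = Q * K" and K: "degree K \<le> 1"
    using SA \<open>Q \<noteq> 0\<close> by (elim dvd_imp_quotient_degree_le)
  then have C: "C = S * A + Q * K"
    by (simp add: algebra_simps)
  show thesis
  proof (rule that[OF L(2) R(2) S(1) K _ R(1) S(2) C])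
    show "L \<noteq> 0"
      using L \<open>E \<noteq> 0\<close> by auto
    show "A * (R - smult (2 * \<mu>) A - smult (2 * t) (S * K)) = smult t (Q * (K\<^sup>2 + L\<^sup>2))"
      by (rule key_identity[OF \<open>Q \<noteq> 0\<close> L(1) E R(1) S(2) C])
  qed
qed

lemma triple_in_param_image:
  fixes A B C X E :: "real poly" and a b c t :: real
  assumes a: "a \<noteq> 0" and disc: "b\<^sup>2 < 4 * a * c" and t: "t \<noteq> 0"
    and deg: "degree A \<le> 2" "degree B \<le> 4" "degree C \<le> 3" "degree X \<le> 2" "degree E \<le> 3"
    and E: "E \<noteq> 0" "E\<^sup>2 = A * B - C\<^sup>2"
    and dvd: "[:c, b, a:] dvd A * B - C\<^sup>2" "[:c, b, a:] dvd smult t B + 2 * X * A"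
  shows "\<exists>k<3. \<exists>u. param k u = triple_of t X A B C"
proof -
  define Q where "Q = [:c, b, a:]"
  have "prime_elem Q" "degree Q = 2" "Q \<noteq> 0"
    using prime_elem_quadratic[OF a disc] a by (auto simp: Q_def)
  obtain L R S \<mu> K where degs: "degree L \<le> 1" "degree R \<le> 2" "degree S \<le> 1" "degree K \<le> 1"
    and "L \<noteq> 0" and R: "smult t B + 2 * X * A = Q * R" and X: "X = smult (- t / 2) (S\<^sup>2) + smult \<mu> Q"
    and C: "C = S * A + Q * K"
    and key: "A * (R - smult (2 * \<mu>) A - smult (2 * t) (S * K)) = smult t (Q * (K\<^sup>2 + L\<^sup>2))"
    by (rule quadratic_divisor_normal_form[OF a disc t deg E Q_def dvd[folded Q_def]])
  define W where "W = R - smult (2 * \<mu>) A - smult (2 * t) (S * K)"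
  have "Q dvd A * W"
    using key by (simp add: W_def dvd_smult)
  then consider "Q dvd W" | "Q dvd A"
    using \<open>prime_elem Q\<close> prime_elem_dvd_mult_iff by blast
  then show ?thesis
  proof cases
    case 1
    have "degree W \<le> degree Q"
      unfolding W_def using \<open>degree Q = 2\<close> degs deg(1) degree_mult_le_add[of S 1 K 1]
      by (intro degree_diff_le order.trans[OF degree_smult_le]) auto
    then obtain \<nu> where "W = smult \<nu> Q"
      using 1 \<open>Q \<noteq> 0\<close> by (elim dvd_imp_smult)
    then show ?thesis
      using sum_of_squares_case[OF t \<open>L \<noteq> 0\<close> \<open>Q \<noteq> 0\<close> degs(4,1,3) _ R X C key]
        \<open>degree Q = 2\<close> by (simp add: W_def)
  next
    case 2
    then obtain \<alpha> where "A = smult \<alpha> Q"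
      using \<open>Q \<noteq> 0\<close> \<open>degree Q = 2\<close> deg(1) by (elim dvd_imp_smult) auto
    then show ?thesis
      using quadratic_factor_case[OF t \<open>L \<noteq> 0\<close> \<open>Q \<noteq> 0\<close> degs(4,1,3) _ R X C key]
        \<open>degree Q = 2\<close> by simp
  qed
qed

section \<open>Dehomogenising binary forms\<close>

lemma coeff_poly_at_1: "coeff (poly (f :: bpoly) 1) i = (\<Sum>j\<le>degree f. poly.coeff (coeff f j) i)"
  by (simp add: poly_altdef coeff_sum)

lemma form_coeff_dehomogenised:
  assumes f: "form_of_degree d f" and "j \<le> d"
  shows "coeff (poly f 1) (d - j) = form_coeff d f j"
proof -
  have "poly.coeff (coeff f j') i = 0" if "i + j' \<noteq> d" for i j'
    using f that unfolding form_of_degree_def by blast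
  then have "coeff (poly f 1) (d - j) = (\<Sum>j'\<le>degree f. if j' = j then poly.coeff (coeff f j) (d - j) else 0)"
    unfolding coeff_poly_at_1 by (intro sum.cong) (use \<open>j \<le> d\<close> in auto)
  also have "\<dots> = form_coeff d f j"
    by (auto simp: form_coeff_def coeff_eq_0)
  finally show ?thesis .
qed

lemma degree_dehomogenised_form:
  assumes "form_of_degree d f"
  shows "degree (poly f 1) \<le> d"
proof (rule degree_le, intro allI impI)
  fix i
  assume "d < i"
  then have "poly.coeff (coeff f j) i = 0" for j
    using assms unfolding form_of_degree_def by force
  then show "coeff (poly f 1) i = 0"
    unfolding coeff_poly_at_1 by simp
qed

lemma dehomogenised_form_nonzero:
  assumes f: "form_of_degree d f"
  shows "poly f 1 \<noteq> 0"
proof -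
  define j i where "j = degree f" and "i = degree (coeff f j)"
  have "f \<noteq> 0"
    using f by (simp add: form_of_degree_def)
  then have ci: "poly.coeff (coeff f j) i \<noteq> 0"
    by (simp add: i_def j_def)
  then have "i + j = d"
    using f unfolding form_of_degree_def by blast
  then have "coeff (poly f 1) (d - j) = poly.coeff (coeff f j) i"
    using form_coeff_dehomogenised[OF f, of j] by (simp add: form_coeff_def flip: \<open>i + j = d\<close>)
  with ci show ?thesis
    by auto
qed

lemma dvd_dehomogenised: "(q :: bpoly) dvd g \<Longrightarrow> poly q 1 dvd poly g 1"
  by (auto elim!: dvdE simp: poly_mult)

lemma is_unit_bpoly_imp_constant: "is_unit (p :: bpoly) \<Longrightarrow> degree p = 0 \<and> degree (coeff p 0) = 0"
  by (auto simp: is_unit_poly_iff is_unit_iff_degree)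

lemma quadratic_form_eq:
  assumes "form_of_degree 2 q"
  shows "q = [:[:0, 0, poly.coeff (coeff q 0) 2:], [:0, poly.coeff (coeff q 1) 1:], [:poly.coeff (coeff q 2) 0:]:]"
    (is "q = ?R")
proof (rule poly_eqI, rule poly_eqI)
  fix j i
  show "poly.coeff (coeff q j) i = poly.coeff (coeff ?R j) i"
  proof (cases "i + j = 2")
    case True
    then have "(j = 0 \<and> i = 2) \<or> (j = 1 \<and> i = 1) \<or> (j = 2 \<and> i = 0)"
      by auto
    then show ?thesis
      by (auto simp: numeral_2_eq_2)
  next
    case False
    with assms show ?thesis
      by (auto simp: form_of_degree_def coeff_pCons split: nat.split)
  qed
qed

lemma irreducible_binary_quadratic_lead_nonzero:
  assumes "irreducible ([:[:0, 0, a:], [:0, b:], [:c:]:] :: bpoly)"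
  shows "a \<noteq> 0"
proof
  assume "a = 0"
  then have "[:[:0, 0, a:], [:0, b:], [:c:]:] = [:0, 1:] * [:[:0, b:], [:c:]:]"
    by simp
  moreover have "\<not> is_unit ([:0, 1:] :: bpoly)"
    using is_unit_bpoly_imp_constant[of "[:0, 1:]"] by auto
  moreover have "\<not> is_unit ([:[:0, b:], [:c:]:] :: bpoly)"
  proof
    assume "is_unit ([:[:0, b:], [:c:]:] :: bpoly)"
    then have "b = 0" "c = 0"
      using is_unit_bpoly_imp_constant[of "[:[:0, b:], [:c:]:]"] by (auto split: if_splits)
    with assms \<open>a = 0\<close> show False
      by simp
  qed
  ultimately show False
    using irreducibleD[OF assms] by blast
qed

lemma irreducible_binary_quadratic_discriminant_neg:
  assumes irr: "irreducible ([:[:0, 0, a:], [:0, b:], [:c:]:] :: bpoly)" and "a \<noteq> 0"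
  shows "b\<^sup>2 < 4 * a * c"
proof (rule ccontr)
  assume "\<not> b\<^sup>2 < 4 * a * c"
  define s where "s = sqrt (b\<^sup>2 - 4 * a * c)"
  have "b * b = s * s + 4 * a * c"
    using \<open>\<not> b\<^sup>2 < 4 * a * c\<close> by (simp add: s_def flip: power2_eq_square)
  define r\<^sub>1 r\<^sub>2 where "r\<^sub>1 = (- b + s) / (2 * a)" and "r\<^sub>2 = (- b - s) / (2 * a)"
  have "- a * r\<^sub>1 - a * r\<^sub>2 = b" "a * r\<^sub>1 * r\<^sub>2 = c"
    using \<open>a \<noteq> 0\<close> \<open>b * b = _\<close> by (simp_all add: r\<^sub>1_def r\<^sub>2_def field_simps algebra_simps)
  moreover have "[:[:0, a:], [:- a * r\<^sub>1:]:] * [:[:0, 1:], [:- r\<^sub>2:]:]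
      = [:[:0, 0, a:], [:0, - a * r\<^sub>1 - a * r\<^sub>2:], [:a * r\<^sub>1 * r\<^sub>2:]:]"
    by (simp add: algebra_simps)
  ultimately have "[:[:0, 0, a:], [:0, b:], [:c:]:] = [:[:0, a:], [:- a * r\<^sub>1:]:] * [:[:0, 1:], [:- r\<^sub>2:]:]"
    by simp
  moreover have "\<not> is_unit ([:[:0, a:], [:- a * r\<^sub>1:]:] :: bpoly)"
    using \<open>a \<noteq> 0\<close> is_unit_bpoly_imp_constant[of "[:[:0, a:], [:- a * r\<^sub>1:]:]"] by auto
  moreover have "\<not> is_unit ([:[:0, 1:], [:- r\<^sub>2:]:] :: bpoly)"
    using is_unit_bpoly_imp_constant[of "[:[:0, 1:], [:- r\<^sub>2:]:]"] by auto
  ultimately show False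
    using irreducibleD[OF irr] by blast
qed

lemma irreducible_quadratic_form_dehomogenised:
  assumes q: "form_of_degree 2 q" and irr: "irreducible q"
  obtains a b c where "a \<noteq> 0" "b\<^sup>2 < 4 * a * c" "poly q 1 = [:c, b, a:]"
proof -
  define a b c where "a = poly.coeff (coeff q 0) 2" and "b = poly.coeff (coeff q 1) 1"
    and "c = poly.coeff (coeff q 2) 0"
  have q_eq: "q = [:[:0, 0, a:], [:0, b:], [:c:]:]"
    unfolding a_def b_def c_def by (rule quadratic_form_eq[OF q])
  from irr have irr': "irreducible [:[:0, 0, a:], [:0, b:], [:c:]:]"
    by (simp flip: q_eq)
  then have "a \<noteq> 0"
    by (rule irreducible_binary_quadratic_lead_nonzero)
  moreover from irr' this have "b\<^sup>2 < 4 * a * c"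
    by (rule irreducible_binary_quadratic_discriminant_neg)
  moreover have "poly q 1 = [:c, b, a:]"
    by (subst q_eq) (simp add: numeral_poly)
  ultimately show thesis
    by (rule that)
qed

lemma poly_g_t_at_1:
  "poly (g_t f2 f3 f4 t \<xi>) 1
     = (poly f2 1 - smult t (poly \<xi> 1)) * (4 * poly f4 1 - (poly \<xi> 1)\<^sup>2) - (poly f3 1)\<^sup>2"
  by (simp add: g_t_def bconst_def)

lemma poly_h_t_at_1:
  "poly (h_t f2 f4 t \<xi>) 1
     = - (smult t (4 * poly f4 1 - (poly \<xi> 1)\<^sup>2) + 2 * poly \<xi> 1 * (poly f2 1 - smult t (poly \<xi> 1)))"
proof -
  have "poly (h_t f2 f4 t \<xi>) 1 = 3 * [:t:] * (poly \<xi> 1)\<^sup>2 - 2 * poly f2 1 * poly \<xi> 1 - 4 * [:t:] * poly f4 1"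
    by (simp add: h_t_def bconst_def)
  then show ?thesis
    unfolding smult_as_mult by algebra
qed

lemma triple_of_inverse: "triple_of t X (P\<^sub>2 - smult t X) (4 * P\<^sub>4 - X\<^sup>2) P\<^sub>3 = (P\<^sub>2, P\<^sub>3, P\<^sub>4)"
  by (simp add: triple_of_def numeral_poly)

lemma in_T_dehomogenised_in_param_image:
  assumes "in_T f2 f3 f4"
  shows "\<exists>k<3. \<exists>u. param k u = (poly f2 1, poly f3 1, poly f4 1)"
proof -
  from assms obtain t \<xi> \<eta> q where forms: "form_of_degree 2 f2" "form_of_degree 3 f3" "form_of_degree 4 f4"
    and t: "t \<noteq> 0" and \<xi>: "form_of_degree 2 \<xi>" and \<eta>: "form_of_degree 3 \<eta>"
    and g: "\<eta>\<^sup>2 = g_t f2 f3 f4 t \<xi>" and q: "form_of_degree 2 q" "irreducible q"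
    and qg: "q dvd g_t f2 f3 f4 t \<xi>" and qh: "q dvd h_t f2 f4 t \<xi>"
    unfolding in_T_def by blast
  obtain a b c where abc: "a \<noteq> 0" "b\<^sup>2 < 4 * a * c" "poly q 1 = [:c, b, a:]"
    using irreducible_quadratic_form_dehomogenised[OF q] .
  define X A B where "X = poly \<xi> 1" and "A = poly f2 1 - smult t X" and "B = 4 * poly f4 1 - X\<^sup>2"
  note g1 = poly_g_t_at_1[of f2 f3 f4 t \<xi>, folded X_def, folded A_def B_def]
  note h1 = poly_h_t_at_1[of f2 f4 t \<xi>, folded X_def, folded A_def B_def]
  have X: "degree X \<le> 2"
    unfolding X_def by (rule degree_dehomogenised_form[OF \<xi>])
  have "\<exists>k<3. \<exists>u. param k u = triple_of t X A B (poly f3 1)"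
  proof (rule triple_in_param_image[OF abc(1,2) t])
    show "degree A \<le> 2"
      unfolding A_def using degree_dehomogenised_form[OF forms(1)] degree_smult_le[of t X] X
      by (intro degree_diff_le) auto
    show "degree B \<le> 4"
      unfolding B_def using degree_dehomogenised_form[OF forms(3)] degree_power_le[of X 2] X
        degree_mult_le[of 4 "poly f4 1"]
      by (intro degree_diff_le) (auto simp: degree_numeral)
    show "degree (poly f3 1) \<le> 3" "degree X \<le> 2" "degree (poly \<eta> 1) \<le> 3"
      using degree_dehomogenised_form forms(2) \<eta> X by auto
    show "poly \<eta> 1 \<noteq> 0"
      by (rule dehomogenised_form_nonzero[OF \<eta>])
    show "(poly \<eta> 1)\<^sup>2 = A * B - (poly f3 1)\<^sup>2"
      using arg_cong[OF g, of "\<lambda>p. poly p 1"] g1 by simp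
    show "[:c, b, a:] dvd A * B - (poly f3 1)\<^sup>2"
      using dvd_dehomogenised[OF qg] g1 abc(3) by simp
    show "[:c, b, a:] dvd smult t B + 2 * X * A"
      using dvd_dehomogenised[OF qh] unfolding h1 abc(3) dvd_minus_iff .
  qed
  then show ?thesis
    by (simp add: A_def B_def triple_of_inverse)
qed

section \<open>A polynomial vanishing on T\<close>

definition coeff_coords :: "real poly \<times> real poly \<times> real poly \<Rightarrow> nat \<Rightarrow> real" where
  "coeff_coords P i =
     (if i < 3 then coeff (fst P) (2 - i)
      else if i < 7 then coeff (fst (snd P)) (6 - i)
      else coeff (snd (snd P)) (11 - i))"

lemma polyfun_coeff_coords_param: "polyfun 11 (\<lambda>u. coeff_coords (param k u) i)"
  using polyfun_poly_param[of k] unfolding coeff_coords_def polyfun_poly_def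
  by (cases "i < 3"; cases "i < 7") auto

lemma triple_coords_dehomogenised:
  assumes "form_of_degree 2 f2" "form_of_degree 3 f3" "form_of_degree 4 f4" "i < 12"
  shows "triple_coords f2 f3 f4 i = coeff_coords (poly f2 1, poly f3 1, poly f4 1) i"
  using form_coeff_dehomogenised[OF assms(1), of i] form_coeff_dehomogenised[OF assms(2), of "i - 3"]
    form_coeff_dehomogenised[OF assms(3), of "i - 7"] assms(4)
  by (auto simp: triple_coords_def coeff_coords_def)

lemma monomial_fun_cong: "(\<And>i. i < n \<Longrightarrow> v i = w i) \<Longrightarrow> monomial_fun n \<alpha> v = monomial_fun n \<alpha> w"
  unfolding monomial_fun_def by (intro prod.cong) auto

lemma poly12_of_exponent_box:
  assumes "\<exists>\<alpha>\<in>exponent_box 12 e. c \<alpha> \<noteq> 0"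
  obtains c' where "poly12 c'" "\<exists>\<alpha>. c' \<alpha> \<noteq> 0"
    "\<And>v. eval12 c' v = (\<Sum>\<alpha>\<in>exponent_box 12 e. c \<alpha> * monomial_fun 12 \<alpha> v)"
proof
  define c' where "c' \<alpha> = (if \<alpha> \<in> exponent_box 12 e then c \<alpha> else 0)" for \<alpha>
  have supp: "{\<alpha>. c' \<alpha> \<noteq> 0} \<subseteq> exponent_box 12 e"
    by (auto simp: c'_def split: if_splits)
  show "poly12 c'"
    unfolding poly12_def using finite_subset[OF supp finite_exponent_box] supp
    by (auto simp: exponent_box_def)
  show "\<exists>\<alpha>. c' \<alpha> \<noteq> 0"
    using assms by (auto simp: c'_def)
  fix v
  have "eval12 c' v = (\<Sum>\<alpha>\<in>exponent_box 12 e. c' \<alpha> * monomial_fun 12 \<alpha> v)"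
    unfolding eval12_def monomial_fun_def
    by (rule sum.mono_neutral_left[OF finite_exponent_box supp]) auto
  then show "eval12 c' v = (\<Sum>\<alpha>\<in>exponent_box 12 e. c \<alpha> * monomial_fun 12 \<alpha> v)"
    by (simp add: c'_def)
qed

theorem proposition8p1:
  shows "\<exists>c. poly12 c \<and> (\<exists>\<alpha>. c \<alpha> \<noteq> 0) \<and>
           (\<forall>f2 f3 f4. in_T f2 f3 f4 \<longrightarrow> eval12 c (triple_coords f2 f3 f4) = 0)"
proof -
  obtain e c where c: "\<exists>\<alpha>\<in>exponent_box 12 e. c \<alpha> \<noteq> 0" and vanish:
      "\<And>k u. k \<in> {..<3::nat} \<Longrightarrow>
         (\<Sum>\<alpha>\<in>exponent_box 12 e. c \<alpha> * monomial_fun 12 \<alpha> (coeff_coords (param k u))) = 0"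
    by (rule polynomial_images_in_hypersurface[of "{..<3}" 11 12 "\<lambda>k u. coeff_coords (param k u)"])
      (simp_all add: polyfun_coeff_coords_param)
  obtain c' where "poly12 c'" "\<exists>\<alpha>. c' \<alpha> \<noteq> 0"
    and eval: "\<And>v. eval12 c' v = (\<Sum>\<alpha>\<in>exponent_box 12 e. c \<alpha> * monomial_fun 12 \<alpha> v)"
    using poly12_of_exponent_box[OF c] by blast
  have "eval12 c' (triple_coords f2 f3 f4) = 0" if T: "in_T f2 f3 f4" for f2 f3 f4
  proof -
    obtain k u where "k < 3" and param: "param k u = (poly f2 1, poly f3 1, poly f4 1)"
      using in_T_dehomogenised_in_param_image[OF T] by blast
    have "monomial_fun 12 \<alpha> (triple_coords f2 f3 f4) = monomial_fun 12 \<alpha> (coeff_coords (param k u))" for \<alpha>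
      using T by (intro monomial_fun_cong) (simp add: param in_T_def triple_coords_dehomogenised)
    with vanish \<open>k < 3\<close> show ?thesis
      by (simp add: eval)
  qed
  with \<open>poly12 c'\<close> \<open>\<exists>\<alpha>. c' \<alpha> \<noteq> 0\<close> show ?thesis
    by blast
qed

end
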